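(* Let $A$ be a unique factorization domain and $R$ a subring of $A$ such that the group of units of $R$ equals that of $A$ and $R_0\cap A=R$, where $R_0$ is the field of fractions of $R$ inside that of $A$. The following are equivalent: (i) $\operatorname{Sqf}R\subset\operatorname{Sqf}A$; (ii) for every $x\in A$ and $y\in\operatorname{Sqf}A$, if $x^2y\in R\setminus\{0\}$, then $x,y\in R$ (i.e. $R$ is square-factorially closed in $A$).
   Context: For a commutative ring $R$, $\operatorname{Sqf}R$ is the set of square-free elements of $R$, where $a\in R$ is square-free if it cannot be written as $a=b^2c$ with $b,c\in R$ and $b$ not a unit of $R$. *)

theory Defs
  imports "HOL-Computational_Algebra.Factorial_Ring"
begin

definition is_subring :: "'a::comm_ring_1 set \<Rightarrow> bool" where
  "is_subring R \<longleftrightarrow> 0 \<in> R \<and> 1 \<in> R \<and>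
     (\<forall>x\<in>R. \<forall>y\<in>R. x + y \<in> R \<and> x * y \<in> R \<and> - x \<in> R)"

definition units_in :: "'a::comm_ring_1 set \<Rightarrow> 'a set" where
  "units_in R = {x \<in> R. \<exists>y\<in>R. x * y = 1}"

definition sqf_in :: "'a::comm_ring_1 set \<Rightarrow> 'a set" where
  "sqf_in R = {a \<in> R. \<not> (\<exists>b\<in>R. \<exists>c\<in>R. a = b^2 * c \<and> b \<notin> units_in R)}"

text \<open>R_0 \<inter> A: elements of A that are a fraction r/s with r, s in R, s nonzero.\<close>
definition frac_of_in :: "'a::comm_ring_1 set \<Rightarrow> 'a set" where
  "frac_of_in R = {a. \<exists>r\<in>R. \<exists>s\<in>R. s \<noteq> 0 \<and> a * s = r}"

end

theory Submission
  imports Defs "HOL-Computational_Algebra.Squarefree"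
begin

text \<open>
  In the UFD every nonzero element is \<open>x\<^sup>2 y\<close> with \<open>y\<close> square-free, and
  \<open>x\<close>, \<open>y\<close> are unique up to units. Since \<open>R\<close> has the same units as the UFD,
  non-units of \<open>R\<close> have prime factors, so splitting off squares of non-units terminates
  and every nonzero element of \<open>R\<close> is \<open>b\<^sup>2 c\<close> with \<open>b \<in> R\<close> and \<open>c\<close> square-free in \<open>R\<close>.
  If square-free elements of \<open>R\<close> stay square-free in the UFD, uniqueness makes
  any decomposition \<open>x\<^sup>2 y\<close> of an element of \<open>R\<close> a unit multiple of \<open>b\<^sup>2 c\<close>, so
  \<open>x, y \<in> R\<close>. Conversely, writing a square-free element of \<open>R\<close> as \<open>x\<^sup>2 y\<close> with
  \<open>y\<close> square-free in the UFD, closedness gives \<open>x \<in> R\<close>, hence \<open>x\<close> is a unit.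
\<close>

lemma units_in_UNIV: "units_in (UNIV :: 'a::comm_ring_1 set) = {x. x dvd 1}"
  unfolding units_in_def by (auto simp: dvd_def mult.commute)

lemma units_in_subset_UNIV: "units_in R \<subseteq> units_in (UNIV :: 'a::comm_ring_1 set)"
  unfolding units_in_def by auto

lemma sqf_in_UNIV_iff_squarefree:
  fixes a :: "'a::{factorial_semiring, idom}"
  shows "a \<in> sqf_in UNIV \<longleftrightarrow> squarefree a"
  unfolding sqf_in_def squarefree_def units_in_UNIV
  by (auto simp: dvd_def mult.commute)

lemma subring_mult_closed: "is_subring R \<Longrightarrow> x \<in> R \<Longrightarrow> y \<in> R \<Longrightarrow> x * y \<in> R"
  unfolding is_subring_def by blast

lemma subring_power2_mult_closed:
  "is_subring R \<Longrightarrow> x \<in> R \<Longrightarrow> y \<in> R \<Longrightarrow> x\<^sup>2 * y \<in> R"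
  by (simp add: subring_mult_closed power2_eq_square)

lemma unit_in_subring:
  assumes "units_in (UNIV :: 'a::comm_ring_1 set) \<subseteq> units_in R" "w dvd 1"
  shows "w \<in> R"
proof -
  have "w \<in> units_in R" using assms unfolding units_in_UNIV by blast
  then show ?thesis unfolding units_in_def by simp
qed

lemma zero_notin_sqf_in: "0 \<in> R \<Longrightarrow> 0 \<notin> sqf_in R"
  unfolding sqf_in_def units_in_def by (auto intro!: bexI[of _ 0])

lemma size_prime_factorization_less:
  fixes c d e :: "'a::{factorial_semiring, idom}"
  assumes "c = d\<^sup>2 * e" "c \<noteq> 0" "\<not> is_unit d"
  shows "size (prime_factorization e) < size (prime_factorization c)"
proof -
  have "d\<^sup>2 \<noteq> 0" "e \<noteq> 0" using assms by auto
  then have "prime_factorization c = prime_factorization (d\<^sup>2) + prime_factorization e"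
    using assms(1) prime_factorization_mult by blast
  moreover have "\<not> is_unit (d\<^sup>2)" using assms(3) by (simp add: is_unit_power_iff)
  then have "prime_factorization (d\<^sup>2) \<noteq> {#}"
    using \<open>d\<^sup>2 \<noteq> 0\<close> prime_factorization_empty_iff by blast
  ultimately show ?thesis by (simp add: nonempty_has_size)
qed

lemma subring_square_sqf_decomposition:
  fixes R :: "'a::{factorial_semiring, idom} set"
  assumes sub: "is_subring R" and units: "units_in (UNIV :: 'a set) \<subseteq> units_in R"
    and "c \<in> R" "c \<noteq> 0"
  shows "\<exists>b\<in>R. \<exists>c'\<in>sqf_in R. c = b\<^sup>2 * c'"
  using assms(3,4)
proof (induction "size (prime_factorization c)" arbitrary: c rule: less_induct)
  case less
  show ?case
  proof (cases "c \<in> sqf_in R")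
    case True
    moreover have "1 \<in> R" using sub unfolding is_subring_def by blast
    ultimately show ?thesis by (intro bexI[of _ 1] bexI[of _ c]) simp_all
  next
    case False
    then obtain d e where de: "d \<in> R" "e \<in> R" "c = d\<^sup>2 * e" "d \<notin> units_in R"
      using less.prems unfolding sqf_in_def by auto
    have "\<not> is_unit d" using de(4) units unfolding units_in_UNIV by blast
    then have "size (prime_factorization e) < size (prime_factorization c)"
      using size_prime_factorization_less de(3) less.prems(2) by blast
    moreover have "e \<noteq> 0" using de(3) less.prems(2) by auto
    ultimately obtain b c' where "b \<in> R" "c' \<in> sqf_in R" "e = b\<^sup>2 * c'"
      using less.hyps de(2) by blast
    have "c = (d * b)\<^sup>2 * c'" using de(3) \<open>e = b\<^sup>2 * c'\<close> by (simp add: power_mult_distrib)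
    moreover have "d * b \<in> R" using subring_mult_closed[OF sub de(1) \<open>b \<in> R\<close>] .
    ultimately show ?thesis using \<open>c' \<in> sqf_in R\<close> by blast
  qed
qed

lemma square_part_unique_up_to_unit:
  fixes x y b c :: "'a::{factorial_semiring, idom}"
  assumes "squarefree y" "squarefree c" "x\<^sup>2 * y = b\<^sup>2 * c" "x\<^sup>2 * y \<noteq> 0"
  shows "\<exists>w. is_unit w \<and> x = w * b"
proof -
  have "x \<noteq> 0" "b \<noteq> 0" "y \<noteq> 0" "c \<noteq> 0" using assms by auto
  have "normalize x = normalize b"
  proof (rule multiplicity_eq_imp_eq[OF \<open>x \<noteq> 0\<close> \<open>b \<noteq> 0\<close>])
    fix p :: 'a assume p: "prime p"
    have "multiplicity p (x\<^sup>2 * y) = 2 * multiplicity p x + multiplicity p y"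
         "multiplicity p (b\<^sup>2 * c) = 2 * multiplicity p b + multiplicity p c"
      using p \<open>x \<noteq> 0\<close> \<open>y \<noteq> 0\<close> \<open>b \<noteq> 0\<close> \<open>c \<noteq> 0\<close>
      by (simp_all add: prime_elem_multiplicity_mult_distrib prime_elem_multiplicity_power_distrib)
    moreover have "multiplicity p y \<le> 1" "multiplicity p c \<le> 1"
      using assms(1,2) p \<open>y \<noteq> 0\<close> \<open>c \<noteq> 0\<close> squarefree_factorial_semiring'' by auto
    ultimately show "multiplicity p x = multiplicity p b" using assms(3) by simp
  qed
  then show ?thesis by (metis associatedE1 mult.commute)
qed

lemma sqf_decomposition_unique_up_to_unit:
  fixes x y b c :: "'a::{factorial_semiring, idom}"
  assumes "squarefree y" "squarefree c" "x\<^sup>2 * y = b\<^sup>2 * c" "x\<^sup>2 * y \<noteq> 0"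
  obtains w v where "is_unit w" "is_unit v" "x = w * b" "y = v\<^sup>2 * c"
proof -
  obtain w where w: "is_unit w" "x = w * b"
    using square_part_unique_up_to_unit[OF assms] by blast
  define v where "v = 1 div w"
  have "is_unit v" "v * w = 1" using w(1) unfolding v_def by auto
  have "b\<^sup>2 * (w\<^sup>2 * y) = b\<^sup>2 * c" "b\<^sup>2 \<noteq> 0"
    using assms(3,4) w(2) by (auto simp: power_mult_distrib algebra_simps)
  then have "w\<^sup>2 * y = c" by simp
  have "y = (v * w)\<^sup>2 * y" using \<open>v * w = 1\<close> by simp
  also have "\<dots> = v\<^sup>2 * c" using \<open>w\<^sup>2 * y = c\<close> by (simp add: power_mult_distrib mult.assoc)
  finally have "y = v\<^sup>2 * c" .
  with that w \<open>is_unit v\<close> show ?thesis by blast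
qed

lemma square_factorially_closed_if_sqf_in_subset:
  fixes R :: "'a::{factorial_semiring, idom} set"
  assumes sub: "is_subring R" and units: "units_in (UNIV :: 'a set) \<subseteq> units_in R"
    and inc: "sqf_in R \<subseteq> sqf_in UNIV"
    and y: "y \<in> sqf_in UNIV" and xy: "x\<^sup>2 * y \<in> R - {0}"
  shows "x \<in> R \<and> y \<in> R"
proof -
  have "x\<^sup>2 * y \<in> R" "x\<^sup>2 * y \<noteq> 0" using xy by simp_all
  then obtain b c where "b \<in> R" "c \<in> sqf_in R" and dec: "x\<^sup>2 * y = b\<^sup>2 * c"
    using subring_square_sqf_decomposition[OF sub units] by blast
  have "c \<in> R" using \<open>c \<in> sqf_in R\<close> unfolding sqf_in_def by blast
  have "squarefree y" using y sqf_in_UNIV_iff_squarefree by blast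
  moreover have "squarefree c"
    using sqf_in_UNIV_iff_squarefree subsetD[OF inc \<open>c \<in> sqf_in R\<close>] by blast
  ultimately obtain w v where "is_unit w" "is_unit v" "x = w * b" "y = v\<^sup>2 * c"
    using sqf_decomposition_unique_up_to_unit dec \<open>x\<^sup>2 * y \<noteq> 0\<close> by metis
  have "w \<in> R" "v \<in> R"
    using unit_in_subring[OF units] \<open>is_unit w\<close> \<open>is_unit v\<close> by blast+
  have "x \<in> R" unfolding \<open>x = w * b\<close> using subring_mult_closed[OF sub \<open>w \<in> R\<close> \<open>b \<in> R\<close>] .
  moreover have "y \<in> R"
    unfolding \<open>y = v\<^sup>2 * c\<close> using subring_power2_mult_closed[OF sub \<open>v \<in> R\<close> \<open>c \<in> R\<close>] .
  ultimately show ?thesis ..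
qed

lemma sqf_in_subset_if_square_factorially_closed:
  fixes R :: "'a::{factorial_semiring, idom} set"
  assumes "0 \<in> R"
    and closed: "\<And>x y. y \<in> sqf_in UNIV \<Longrightarrow> x\<^sup>2 * y \<in> R - {0} \<Longrightarrow> x \<in> R \<and> y \<in> R"
    and a: "a \<in> sqf_in R"
  shows "a \<in> sqf_in UNIV"
proof -
  define x y where "x = square_part a" and "y = squarefree_part a"
  have dec: "a = x\<^sup>2 * y"
    unfolding x_def y_def using squarefree_decompose[of a] by (simp add: mult.commute)
  have "y \<in> sqf_in UNIV" unfolding y_def sqf_in_UNIV_iff_squarefree by simp
  moreover have "a \<in> R" using a unfolding sqf_in_def by blast
  moreover have "a \<noteq> 0" using a zero_notin_sqf_in[OF \<open>0 \<in> R\<close>] by blast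
  ultimately have "x \<in> R" "y \<in> R" using closed[of y x] dec by simp_all
  then have "x \<in> units_in R" using a dec unfolding sqf_in_def by blast
  then have "is_unit x" using units_in_subset_UNIV[of R] unfolding units_in_UNIV by blast
  then have "is_unit (x\<^sup>2)" by (simp add: is_unit_power_iff)
  have "squarefree a"
  proof (rule squarefreeI)
    fix z assume "z\<^sup>2 dvd a"
    then have "z\<^sup>2 dvd y" using dec \<open>is_unit (x\<^sup>2)\<close> by (metis dvd_mult_unit_iff')
    then show "is_unit z"
      using \<open>y \<in> sqf_in UNIV\<close> sqf_in_UNIV_iff_squarefree squarefreeD by blast
  qed
  then show ?thesis using sqf_in_UNIV_iff_squarefree by blast
qed

theorem theorem3p4:
  fixes R :: "'a::{factorial_semiring, idom} set"
  assumes "is_subring R"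
    and "units_in R = units_in (UNIV :: 'a set)"
    and "frac_of_in R = R"
  shows "sqf_in R \<subseteq> sqf_in (UNIV :: 'a set) \<longleftrightarrow>
    (\<forall>x y. y \<in> sqf_in (UNIV :: 'a set) \<and> x^2 * y \<in> R - {0} \<longrightarrow> x \<in> R \<and> y \<in> R)"
proof
  have "units_in UNIV \<subseteq> units_in R" using assms(2) by simp
  moreover assume "sqf_in R \<subseteq> sqf_in UNIV"
  ultimately show "\<forall>x y. y \<in> sqf_in UNIV \<and> x^2 * y \<in> R - {0} \<longrightarrow> x \<in> R \<and> y \<in> R"
    using square_factorially_closed_if_sqf_in_subset[OF assms(1)] by blast
next
  assume closed: "\<forall>x y. y \<in> sqf_in UNIV \<and> x^2 * y \<in> R - {0} \<longrightarrow> x \<in> R \<and> y \<in> R"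
  have "0 \<in> R" using assms(1) unfolding is_subring_def by simp
  have closed_rule: "x \<in> R \<and> y \<in> R" if "y \<in> sqf_in UNIV" "x^2 * y \<in> R - {0}" for x y
    using closed[rule_format, OF conjI[OF that]] .
  show "sqf_in R \<subseteq> sqf_in UNIV"
    using sqf_in_subset_if_square_factorially_closed[OF \<open>0 \<in> R\<close> closed_rule] by (rule subsetI)
qed

end
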